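(* Let $K\subseteq\mathbb{R}^n$ be a closed convex cone that is facially exposed, and let $F$ be a face of $K$ with $F=\operatorname{cone}\{p_1,p_2\}=\{\alpha p_1+\beta p_2:\alpha,\beta\ge0\}$ for some linearly independent $p_1,p_2\in\mathbb{R}^n$. Then $K^*+F^\perp$ is closed.
   Context: $\mathbb{R}^n$ is identified with its dual. A face of $K$ is a closed convex $F\subseteq K$ such that $x\in F$, $y,z\in K$, $x\in(y,z)$ imply $y,z\in F$; it is exposed if $F=K\cap H$ for some supporting hyperplane $H$; $K$ is facially exposed if every nonempty face $F\ne K$ is exposed. $K^*=\{s:\langle s,x\rangle\ge0\ \forall x\in K\}$, $F^\perp=\{s:\langle s,x\rangle=0\ \forall x\in F\}$. *)

theory Defs
  imports "HOL-Analysis.Analysis"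
begin

definition facially_exposed :: "'a::euclidean_space set \<Rightarrow> bool" where
  "facially_exposed K \<longleftrightarrow>
     (\<forall>F. F face_of K \<and> F \<noteq> {} \<and> F \<noteq> K \<longrightarrow> F exposed_face_of K)"

definition dual_cone :: "'a::euclidean_space set \<Rightarrow> 'a set" where
  "dual_cone K = {s. \<forall>x\<in>K. 0 \<le> s \<bullet> x}"

definition perp_set :: "'a::euclidean_space set \<Rightarrow> 'a set" where
  "perp_set F = {s. \<forall>x\<in>F. s \<bullet> x = 0}"

end

theory Submission
  imports Defs
begin

text \<open>Each edge of the two-dimensional face \<open>F = cone {p\<^sub>1, p\<^sub>2}\<close> is a face of \<open>F\<close>, hence of \<open>K\<close>,
  and it is proper and contains \<open>0\<close>, so facial exposedness gives \<open>s\<^sub>i \<in> K\<^sup>*\<close> vanishing on that edge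
  and positive at the other generator. Every \<open>y\<close> with \<open>y \<bullet> p\<^sub>1, y \<bullet> p\<^sub>2 \<ge> 0\<close> then agrees on \<open>span F\<close>
  with a nonnegative combination of \<open>s\<^sub>1, s\<^sub>2\<close>, so \<open>K\<^sup>* + F\<^sup>\<bottom>\<close> is the intersection of the two
  closed halfspaces \<open>{y. y \<bullet> p\<^sub>i \<ge> 0}\<close>.\<close>

lemma independent_pair_scaleR_eq_0:
  fixes p q :: "'a::real_vector"
  assumes "independent {p, q}" "p \<noteq> q" "x *\<^sub>R p + y *\<^sub>R q = 0"
  shows "x = 0 \<and> y = 0"
proof -
  let ?u = "\<lambda>v. if v = p then x else y"
  have sum: "(\<Sum>v\<in>{p, q}. ?u v *\<^sub>R v) = 0"
    using assms(2,3) by simp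
  have "?u v = 0" if "v \<in> {p, q}" for v
    using independentD[OF assms(1) _ order_refl sum that] by simp
  then show ?thesis
    using assms(2) by (metis insertCI)
qed

lemma pair_cone_generators:
  fixes p q :: "'a::real_vector"
  shows "p \<in> {\<alpha> *\<^sub>R p + \<beta> *\<^sub>R q | \<alpha> \<beta>. \<alpha> \<ge> 0 \<and> \<beta> \<ge> 0}"
    and "q \<in> {\<alpha> *\<^sub>R p + \<beta> *\<^sub>R q | \<alpha> \<beta>. \<alpha> \<ge> 0 \<and> \<beta> \<ge> 0}"
  by (rule CollectI, rule exI[of _ 1], rule exI[of _ 0], simp)
     (rule CollectI, rule exI[of _ 0], rule exI[of _ 1], simp)

lemma pair_cone_commute:
  fixes p q :: "'a::real_vector"
  shows "{\<alpha> *\<^sub>R p + \<beta> *\<^sub>R q | \<alpha> \<beta>. \<alpha> \<ge> 0 \<and> \<beta> \<ge> 0}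
       = {\<alpha> *\<^sub>R q + \<beta> *\<^sub>R p | \<alpha> \<beta>. \<alpha> \<ge> 0 \<and> \<beta> \<ge> 0}"
  by (subst add.commute) blast

lemma ray_face_of_pair_cone:
  fixes p q :: "'a::real_vector"
  assumes "independent {p, q}" "p \<noteq> q"
  shows "{c *\<^sub>R q | c. c \<ge> 0} face_of {\<alpha> *\<^sub>R p + \<beta> *\<^sub>R q | \<alpha> \<beta>. \<alpha> \<ge> 0 \<and> \<beta> \<ge> 0}"
    (is "?R face_of ?F")
  unfolding face_of_def
proof (intro conjI ballI impI)
  show "?R \<subseteq> ?F" by force
  show "convex ?R"
  proof (rule convexI)
    fix x y and u v :: real
    assume "x \<in> ?R" "y \<in> ?R" "0 \<le> u" "0 \<le> v"
    then obtain c d where "x = c *\<^sub>R q" "y = d *\<^sub>R q" "c \<ge> 0" "d \<ge> 0" by auto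
    then have "u *\<^sub>R x + v *\<^sub>R y = (u * c + v * d) *\<^sub>R q" "u * c + v * d \<ge> 0"
      using \<open>0 \<le> u\<close> \<open>0 \<le> v\<close> by (auto simp: algebra_simps)
    then show "u *\<^sub>R x + v *\<^sub>R y \<in> ?R" by blast
  qed
  fix a b x
  assume "a \<in> ?F" "b \<in> ?F" "x \<in> ?R" "x \<in> open_segment a b"
  then obtain a1 a2 b1 b2 c u where
    a: "a = a1 *\<^sub>R p + a2 *\<^sub>R q" "a1 \<ge> 0" "a2 \<ge> 0" and
    b: "b = b1 *\<^sub>R p + b2 *\<^sub>R q" "b1 \<ge> 0" "b2 \<ge> 0" and
    x: "c *\<^sub>R q = (1 - u) *\<^sub>R a + u *\<^sub>R b" and u: "0 < u" "u < 1"
    unfolding in_segment mem_Collect_eq by (elim exE conjE) blast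
  have "((1 - u) * a1 + u * b1) *\<^sub>R p + ((1 - u) * a2 + u * b2 - c) *\<^sub>R q = 0"
    using x unfolding a(1) b(1) by (simp add: algebra_simps)
  then have "(1 - u) * a1 + u * b1 = 0"
    using independent_pair_scaleR_eq_0[OF assms] by blast
  moreover have "(1 - u) * a1 \<ge> 0" "u * b1 \<ge> 0" using u a b by auto
  ultimately have "a1 = 0" "b1 = 0" using u by (auto simp: add_nonneg_eq_0_iff)
  then show "a \<in> ?R" "b \<in> ?R" using a b by auto
qed

lemma exposed_face_of_through_0:
  fixes K R :: "'a::euclidean_space set"
  assumes "R exposed_face_of K" "0 \<in> R"
  obtains s where "s \<in> dual_cone K" "R = {x \<in> K. s \<bullet> x = 0}"
proof -
  obtain a b where "K \<subseteq> {x. a \<bullet> x \<le> b}" "R = K \<inter> {x. a \<bullet> x = b}"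
    using assms(1) unfolding exposed_face_of_def by blast
  moreover have "b = 0" using assms(2) calculation(2) by auto
  ultimately show thesis
    by (intro that[of "- a"]) (auto simp: dual_cone_def)
qed

lemma facially_exposed_separating_functional:
  fixes K R :: "'a::euclidean_space set"
  assumes "facially_exposed K" "R face_of K" "0 \<in> R" "p \<in> K" "p \<notin> R"
  obtains s where "s \<in> dual_cone K" "\<And>x. x \<in> R \<Longrightarrow> s \<bullet> x = 0" "s \<bullet> p > 0"
proof -
  have "R exposed_face_of K"
    using assms unfolding facially_exposed_def by blast
  then obtain s where s: "s \<in> dual_cone K" "R = {x \<in> K. s \<bullet> x = 0}"
    using assms(3) exposed_face_of_through_0 by blast
  moreover have "s \<bullet> p \<ge> 0" using s(1) assms(4) by (auto simp: dual_cone_def)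
  ultimately show thesis
    using assms(4,5) by (intro that) (auto simp: order_le_less)
qed

lemma facially_exposed_pair_cone_edge_functional:
  fixes K :: "'a::euclidean_space set"
  assumes "facially_exposed K"
    and "{\<alpha> *\<^sub>R p + \<beta> *\<^sub>R q | \<alpha> \<beta>. \<alpha> \<ge> 0 \<and> \<beta> \<ge> 0} face_of K"
    and "independent {p, q}" "p \<noteq> q"
  obtains s where "s \<in> dual_cone K" "s \<bullet> q = 0" "s \<bullet> p > 0"
proof -
  let ?R = "{c *\<^sub>R q | c. c \<ge> 0}"
  have "0 \<in> ?R" "q \<in> ?R"
    by (rule CollectI, rule exI[of _ 0], simp, rule CollectI, rule exI[of _ 1], simp)
  have "?R face_of K"
    using face_of_trans[OF ray_face_of_pair_cone[OF assms(3,4)] assms(2)] .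
  moreover have "p \<in> K"
    using pair_cone_generators(1) face_of_imp_subset[OF assms(2)] by blast
  moreover have "p \<notin> ?R"
  proof
    assume "p \<in> ?R"
    then obtain c where "p = c *\<^sub>R q" by blast
    then have "1 *\<^sub>R p + (- c) *\<^sub>R q = 0" by simp
    from independent_pair_scaleR_eq_0[OF assms(3,4) this] show False by simp
  qed
  ultimately obtain s where s: "s \<in> dual_cone K" "\<And>x. x \<in> ?R \<Longrightarrow> s \<bullet> x = 0" "s \<bullet> p > 0"
    using facially_exposed_separating_functional[OF assms(1) _ \<open>0 \<in> ?R\<close>] by blast
  show thesis
    using s(1) s(2)[OF \<open>q \<in> ?R\<close>] s(3) by (rule that)
qed

lemma dual_cone_plus_perp_pair_cone:
  fixes K :: "'a::euclidean_space set"
  assumes F: "F = {\<alpha> *\<^sub>R p + \<beta> *\<^sub>R q | \<alpha> \<beta>. \<alpha> \<ge> 0 \<and> \<beta> \<ge> 0}" and "F \<subseteq> K"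
    and s: "s \<in> dual_cone K" "s \<bullet> q = 0" "s \<bullet> p > 0"
    and t: "t \<in> dual_cone K" "t \<bullet> p = 0" "t \<bullet> q > 0"
  shows "{s + t | s t. s \<in> dual_cone K \<and> t \<in> perp_set F} = {y. 0 \<le> y \<bullet> p \<and> 0 \<le> y \<bullet> q}"
proof (intro equalityI subsetI)
  have "p \<in> F" "q \<in> F"
    unfolding F by (rule pair_cone_generators)+
  fix y assume "y \<in> {s + t | s t. s \<in> dual_cone K \<and> t \<in> perp_set F}"
  then obtain s' t' where "y = s' + t'" "s' \<in> dual_cone K" "t' \<in> perp_set F" by blast
  with \<open>p \<in> F\<close> \<open>q \<in> F\<close> \<open>F \<subseteq> K\<close> show "y \<in> {y. 0 \<le> y \<bullet> p \<and> 0 \<le> y \<bullet> q}"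
    unfolding dual_cone_def perp_set_def by (auto simp: inner_add_left)
next
  fix y assume y: "y \<in> {y. 0 \<le> y \<bullet> p \<and> 0 \<le> y \<bullet> q}"
  define r where "r = ((y \<bullet> p) / (s \<bullet> p)) *\<^sub>R s + ((y \<bullet> q) / (t \<bullet> q)) *\<^sub>R t"
  have "r \<in> dual_cone K"
    using s t y unfolding r_def dual_cone_def by (auto simp: inner_add_left intro!: add_nonneg_nonneg)
  moreover have "r \<bullet> p = y \<bullet> p" "r \<bullet> q = y \<bullet> q"
    using s t unfolding r_def by (auto simp: inner_add_left)
  then have "y - r \<in> perp_set F"
    unfolding F perp_set_def by (auto simp: inner_add_right inner_diff_left)
  ultimately show "y \<in> {s + t | s t. s \<in> dual_cone K \<and> t \<in> perp_set F}"
    by (intro CollectI exI[of _ r] exI[of _ "y - r"]) simp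
qed

theorem propositionA3:
  fixes K F :: "'a::euclidean_space set" and p1 p2 :: 'a
  assumes "closed K" and "convex_cone K"
    and "facially_exposed K"
    and "F face_of K"
    and "F = {\<alpha> *\<^sub>R p1 + \<beta> *\<^sub>R p2 | \<alpha> \<beta>. \<alpha> \<ge> 0 \<and> \<beta> \<ge> 0}"
    and "independent {p1, p2}" and "p1 \<noteq> p2"
  shows "closed {s + t | s t. s \<in> dual_cone K \<and> t \<in> perp_set F}"
proof -
  obtain s1 where s1: "s1 \<in> dual_cone K" "s1 \<bullet> p2 = 0" "s1 \<bullet> p1 > 0"
    using facially_exposed_pair_cone_edge_functional[OF assms(3) _ assms(6,7)] assms(4,5) by blast
  have "{\<alpha> *\<^sub>R p2 + \<beta> *\<^sub>R p1 | \<alpha> \<beta>. \<alpha> \<ge> 0 \<and> \<beta> \<ge> 0} face_of K"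
    using assms(4) unfolding assms(5) pair_cone_commute[of p1 p2] .
  moreover have "independent {p2, p1}"
    using assms(6) by (simp add: insert_commute)
  ultimately obtain s2 where s2: "s2 \<in> dual_cone K" "s2 \<bullet> p1 = 0" "s2 \<bullet> p2 > 0"
    using facially_exposed_pair_cone_edge_functional[OF assms(3) _ _ not_sym[OF assms(7)]] by blast
  have "F \<subseteq> K" using assms(4) face_of_imp_subset by blast
  then have "{s + t | s t. s \<in> dual_cone K \<and> t \<in> perp_set F}
      = {y. 0 \<le> y \<bullet> p1 \<and> 0 \<le> y \<bullet> p2}"
    using dual_cone_plus_perp_pair_cone[OF assms(5) _ s1 s2] by blast
  then show ?thesis
    by (simp add: closed_Collect_conj closed_Collect_le continuous_intros)
qed

end
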